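(* Let $n\ge1$, $\mathcal{K}=\{\texttt{a},\texttt{b}\}$, $\epsilon\ge0$ and $p=e^\epsilon/(1+e^\epsilon)$. For the uniform prior $\pi$ on $\mathcal{K}^n$ and the single-target gain function $g_{\rm T}$, $$V_{\rm T}[\pi\triangleright\mathbf{N}\mathbf{S}]=\frac{1}{2^n}\sum_{i=0}^{n}\binom{n}{i}\frac{\max(i,n-i)\,p+\min(i,n-i)(1-p)}{n}.$$
   Context: A dataset is $x=(x_0,\dots,x_{n-1})\in\mathcal{K}^n$; its histogram $h(x)$ is the map $\kappa\mapsto|\{i:x_i=\kappa\}|$; $\#z$ is the number of datasets with histogram $z$. Full $k$-RR channel (with $k=2$) $\mathbf{N}:\mathcal{K}^n\to\mathcal{K}^n$: $\mathbf{N}_{x,y}=\prod_{i}q(y_i\mid x_i)$, $q(b\mid a)=p$ if $b=a$, $1-p$ otherwise. Shuffle channel $\mathbf{S}:\mathcal{K}^n\to\mathcal{K}^n$: $\mathbf{S}_{x,y}=1/\#h(x)$ if $h(y)=h(x)$, else $0$. $\mathbf{N}\mathbf{S}$ is the matrix product. Uniform prior $\pi_x=1/2^n$. Single-target gain function: $\mathcal{W}=\mathcal{K}$, $g_{\rm T}(w,x)=1$ if $x_0=w$, else $0$. Posterior vulnerability: $V_{\rm T}[\pi\triangleright\mathbf{C}]=\sum_{y}\max_{w}\sum_{x}\pi_x\mathbf{C}_{x,y}g_{\rm T}(w,x)$. *)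

theory Defs
  imports Complex_Main
begin

text \<open>Alphabet K = {a,b} is modelled by bool (a = True, b = False).
  Datasets of size n are boolean lists of length n.\<close>

definition datasets :: "nat \<Rightarrow> bool list set" where
  "datasets n = {x. length x = n}"

definition hist :: "bool list \<Rightarrow> bool \<Rightarrow> nat" where
  "hist x = (\<lambda>k. count_list x k)"

definition numhist :: "nat \<Rightarrow> (bool \<Rightarrow> nat) \<Rightarrow> nat" where
  "numhist n z = card {x \<in> datasets n. hist x = z}"

definition krr_q :: "real \<Rightarrow> bool \<Rightarrow> bool \<Rightarrow> real" where
  "krr_q p b a = (if b = a then p else 1 - p)"

definition chanN :: "real \<Rightarrow> bool list \<Rightarrow> bool list \<Rightarrow> real" where
  "chanN p x y = (\<Prod>i<length x. krr_q p (y ! i) (x ! i))"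

definition chanS :: "nat \<Rightarrow> bool list \<Rightarrow> bool list \<Rightarrow> real" where
  "chanS n x y = (if hist y = hist x then 1 / real (numhist n (hist x)) else 0)"

definition chan_mult :: "nat \<Rightarrow> (bool list \<Rightarrow> bool list \<Rightarrow> real)
    \<Rightarrow> (bool list \<Rightarrow> bool list \<Rightarrow> real) \<Rightarrow> bool list \<Rightarrow> bool list \<Rightarrow> real" where
  "chan_mult n A B x y = (\<Sum>z\<in>datasets n. A x z * B z y)"

definition uniform_prior :: "nat \<Rightarrow> bool list \<Rightarrow> real" where
  "uniform_prior n x = 1 / 2 ^ n"

definition gT :: "bool \<Rightarrow> bool list \<Rightarrow> real" where
  "gT w x = (if x ! 0 = w then 1 else 0)"

definition post_vuln :: "nat \<Rightarrow> (bool \<Rightarrow> bool list \<Rightarrow> real) \<Rightarrow> (bool list \<Rightarrow> real)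
    \<Rightarrow> (bool list \<Rightarrow> bool list \<Rightarrow> real) \<Rightarrow> real" where
  "post_vuln n g \<pi> C = (\<Sum>y\<in>datasets n. Max ((\<lambda>w. \<Sum>x\<in>datasets n. \<pi> x * C x y * g w x) ` UNIV))"

end

theory Submission
  imports Defs
begin

text \<open>Summing out the secret input x, the joint weight of an output y of N S and a guess w
  is 1/2^n times the average of q(z ! 0 | w) over the n choose k datasets z with the same letter
  count k as y: only the first letter of the intermediate dataset matters. A fraction k/n of
  these z start with the letter a, so guessing a scores (k p + (n - k)(1 - p))/n and guessing b
  scores ((n - k) p + k (1 - p))/n. As p \<ge> 1/2 the majority letter is the better guess, and
  n choose k outputs y have letter count k.\<close>

lemma finite_datasets: "finite (datasets n)"
  using finite_lists_length_eq[OF finite_UNIV, of n] by (simp add: datasets_def)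

lemma sum_datasets_Suc:
  "(\<Sum>x\<in>datasets (Suc n). f x) = (\<Sum>b\<in>UNIV. \<Sum>x\<in>datasets n. f (b # x))"
proof -
  have "datasets (Suc n) = (\<lambda>(b, x). b # x) ` (UNIV \<times> datasets n)"
    by (auto simp: datasets_def image_iff length_Suc_conv)
  moreover have "inj_on (\<lambda>(b, x). b # x) (UNIV \<times> datasets n)"
    by (auto simp: inj_on_def)
  ultimately show ?thesis
    by (simp add: sum.reindex sum.cartesian_product case_prod_unfold)
qed

definition datasets_count :: "nat \<Rightarrow> nat \<Rightarrow> bool list set" where
  "datasets_count n k = {x \<in> datasets n. count_list x True = k}"

lemma finite_datasets_count: "finite (datasets_count n k)"
  using finite_datasets by (simp add: datasets_count_def)

lemma datasets_count_Suc_first_True: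
  "{x \<in> datasets_count (Suc m) (Suc j). x ! 0} = Cons True ` datasets_count m j"
  by (auto simp: datasets_count_def datasets_def length_Suc_conv)

lemma datasets_count_Suc_first_True_0:
  "{x \<in> datasets_count (Suc m) 0. x ! 0} = {}"
  by (auto simp: datasets_count_def datasets_def length_Suc_conv)

lemma datasets_count_Suc_first_False:
  "{x \<in> datasets_count (Suc m) k. \<not> x ! 0} = Cons False ` datasets_count m k"
  by (auto simp: datasets_count_def datasets_def length_Suc_conv)

lemma card_datasets_count: "card (datasets_count n k) = n choose k"
proof (induction n arbitrary: k)
  case 0
  have "datasets_count 0 k = (if k = 0 then {[]} else {})"
    by (auto simp: datasets_count_def datasets_def)
  then show ?case
    by simp
next
  case (Suc m)
  have "card (datasets_count (Suc m) k)
      = card {x \<in> datasets_count (Suc m) k. x ! 0}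
        + card {x \<in> datasets_count (Suc m) k. \<not> x ! 0}"
    by (subst card_Un_disjoint[symmetric])
      (auto simp: finite_datasets_count intro: arg_cong[where f = card])
  also have "\<dots> = (Suc m choose k)"
    by (cases k)
      (simp_all add: datasets_count_Suc_first_True datasets_count_Suc_first_True_0
        datasets_count_Suc_first_False card_image Suc.IH)
  finally show ?case .
qed

lemma card_datasets_count_first:
  "Suc m * card {x \<in> datasets_count (Suc m) k. x ! 0 = w}
     = (if w then k else Suc m - k) * (Suc m choose k)"
proof (cases w)
  case True
  show ?thesis
  proof (cases k)
    case (Suc j)
    then show ?thesis
      using \<open>w\<close> Suc_times_binomial[of j m]
      by (simp del: binomial_Suc_Suc
          add: datasets_count_Suc_first_True card_image card_datasets_count)
  qed (simp add: True datasets_count_Suc_first_True_0)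
next
  case False
  then show ?thesis
    using binomial_absorb_comp[of "Suc m" k]
    by (simp add: datasets_count_Suc_first_False card_image card_datasets_count)
qed

lemma sum_datasets_by_count:
  "(\<Sum>y\<in>datasets n. f (count_list y True)) = (\<Sum>k=0..n. of_nat (n choose k) * f k)"
proof -
  have "(\<Sum>y\<in>datasets n. f (count_list y True))
      = (\<Sum>k=0..n. \<Sum>y\<in>datasets_count n k. f (count_list y True))"
    unfolding datasets_count_def
    by (rule sum.group[symmetric])
      (auto simp: finite_datasets[unfolded datasets_def] datasets_def count_le_length)
  also have "\<dots> = (\<Sum>k=0..n. of_nat (n choose k) * f k)"
    by (simp add: datasets_count_def card_datasets_count[unfolded datasets_count_def])
  finally show ?thesis .
qed

lemma chanN_Cons: "chanN p (b # x) (c # z) = krr_q p c b * chanN p x z"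
  unfolding chanN_def length_Cons prod.lessThan_Suc_shift by simp

lemma sum_chanN: "length z = n \<Longrightarrow> (\<Sum>x\<in>datasets n. chanN p x z) = 1"
proof (induction n arbitrary: z)
  case 0
  then show ?case
    by (simp add: datasets_def chanN_def)
next
  case (Suc n)
  then obtain c z' where z: "z = c # z'" "length z' = n"
    by (auto simp: length_Suc_conv)
  have "(\<Sum>x\<in>datasets (Suc n). chanN p x z)
      = (\<Sum>b\<in>UNIV. krr_q p c b * (\<Sum>x\<in>datasets n. chanN p x z'))"
    by (simp add: sum_datasets_Suc z chanN_Cons sum_distrib_left)
  also have "\<dots> = 1"
    by (simp add: Suc.IH z UNIV_bool krr_q_def)
  finally show ?case .
qed

lemma sum_chanN_gT:
  assumes "z \<in> datasets (Suc m)"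
  shows "(\<Sum>x\<in>datasets (Suc m). chanN p x z * gT w x) = krr_q p (z ! 0) w"
proof -
  obtain c z' where z: "z = c # z'" "length z' = m"
    using assms by (auto simp: datasets_def length_Suc_conv)
  have "(\<Sum>x\<in>datasets (Suc m). chanN p x z * gT w x)
      = (\<Sum>b\<in>UNIV. krr_q p c b * gT w [b] * (\<Sum>x\<in>datasets m. chanN p x z'))"
    by (simp add: sum_datasets_Suc z chanN_Cons gT_def sum_distrib_left mult_ac)
  also have "\<dots> = krr_q p (z ! 0) w"
    by (simp add: sum_chanN z UNIV_bool gT_def)
  finally show ?thesis .
qed

lemma sum_krr_q:
  assumes "finite S"
  shows "(\<Sum>z\<in>S. krr_q p (f z) w)
    = p * card {z \<in> S. f z = w} + (1 - p) * card {z \<in> S. f z = (\<not> w)}"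
proof -
  have "{z \<in> S. f z = (\<not> w)} = {z \<in> S. f z \<noteq> w}"
    by auto
  then show ?thesis
    using assms by (simp add: krr_q_def sum.If_cases Int_def conj_commute)
qed

lemma count_list_True_False: "count_list x True + count_list x False = length x"
  by (induction x) auto

lemma hist_eq_iff_count_True:
  assumes "length x = length y"
  shows "hist x = hist y \<longleftrightarrow> count_list x True = count_list y True"
proof
  assume "count_list x True = count_list y True"
  moreover have "count_list x False = count_list y False"
    using calculation assms count_list_True_False[of x] count_list_True_False[of y] by simp
  ultimately show "hist x = hist y"
    unfolding hist_def by (intro ext) (metis (full_types))
qed (simp add: hist_def)

lemma numhist_hist:
  assumes "y \<in> datasets n"
  shows "numhist n (hist y) = n choose count_list y True"
proof -
  have "hist x = hist y \<longleftrightarrow> count_list x True = count_list y True" if "x \<in> datasets n" for x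
    using that assms by (intro hist_eq_iff_count_True) (simp add: datasets_def)
  then have "{x \<in> datasets n. hist x = hist y} = datasets_count n (count_list y True)"
    by (auto simp: datasets_count_def)
  then show ?thesis
    by (simp add: numhist_def card_datasets_count)
qed

lemma chanS_eq:
  assumes "z \<in> datasets n" and "y \<in> datasets n"
  shows "chanS n z y
    = (if count_list z True = count_list y True then 1 / real (n choose count_list y True) else 0)"
proof -
  have "hist y = hist z \<longleftrightarrow> count_list z True = count_list y True"
    using assms by (subst hist_eq_iff_count_True) (auto simp: datasets_def)
  then show ?thesis
    by (simp add: chanS_def numhist_hist[OF assms(1)])
qed

lemma max_convex_comb_swap:
  fixes a b p :: real
  assumes "1/2 \<le> p"
  shows "max (p * a + (1 - p) * b) (p * b + (1 - p) * a) = p * max a b + (1 - p) * min a b"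
proof (cases "a \<le> b")
  case True
  then have "(2 * p - 1) * (b - a) \<ge> 0"
    using assms by simp
  then show ?thesis
    using True by (simp add: max_def min_def algebra_simps)
next
  case False
  then have "(2 * p - 1) * (a - b) \<ge> 0"
    using assms by simp
  then show ?thesis
    using False by (simp add: max_def min_def algebra_simps)
qed

lemma sum_datasets_count_krr_q:
  assumes "0 < n"
  shows "real n * (\<Sum>z\<in>datasets_count n k. krr_q p (z ! 0) w)
    = (p * real (if w then k else n - k) + (1 - p) * real (if w then n - k else k))
        * real (n choose k)"
proof -
  obtain m where n: "n = Suc m"
    using assms gr0_implies_Suc by blast
  have "real n * card {z \<in> datasets_count n k. z ! 0 = w'}
      = real (if w' then k else n - k) * real (n choose k)" for w'
    by (simp only: n of_nat_mult[symmetric] card_datasets_count_first)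
  then show ?thesis
    by (simp add: sum_krr_q finite_datasets_count algebra_simps)
qed

lemma sum_prior_chanNS_gT:
  assumes "y \<in> datasets n" and "0 < n"
  shows "(\<Sum>x\<in>datasets n. uniform_prior n x * chan_mult n (chanN p) (chanS n) x y * gT w x)
    = (\<Sum>z\<in>datasets_count n (count_list y True). krr_q p (z ! 0) w)
        / (2 ^ n * real (n choose count_list y True))"
proof -
  let ?k = "count_list y True"
  obtain m where n: "n = Suc m"
    using assms gr0_implies_Suc by blast
  have "(\<Sum>x\<in>datasets n. uniform_prior n x * chan_mult n (chanN p) (chanS n) x y * gT w x)
      = (\<Sum>x\<in>datasets n. \<Sum>z\<in>datasets n. chanS n z y * (chanN p x z * gT w x)) / 2 ^ n"
    by (simp add: chan_mult_def uniform_prior_def sum_distrib_left sum_distrib_right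
        sum_divide_distrib mult_ac)
  also have "\<dots> = (\<Sum>z\<in>datasets n. chanS n z y * (\<Sum>x\<in>datasets n. chanN p x z * gT w x)) / 2 ^ n"
    by (subst sum.swap) (simp add: sum_distrib_left)
  also have "\<dots> = (\<Sum>z\<in>datasets n. chanS n z y * krr_q p (z ! 0) w) / 2 ^ n"
    by (intro arg_cong[where f = "\<lambda>s. s / 2 ^ n"] sum.cong refl)
      (simp add: n sum_chanN_gT)
  also have "\<dots> = (\<Sum>z\<in>datasets_count n ?k. krr_q p (z ! 0) w / real (n choose ?k)) / 2 ^ n"
    unfolding datasets_count_def sum.inter_filter[OF finite_datasets]
    by (intro arg_cong[where f = "\<lambda>s. s / 2 ^ n"] sum.cong refl) (simp add: chanS_eq assms(1))
  finally show ?thesis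
    by (simp add: sum_divide_distrib mult.commute)
qed

lemma Max_sum_prior_chanNS_gT:
  assumes "y \<in> datasets n" and "count_list y True = k" and "0 < n" and "1/2 \<le> p"
  shows "Max ((\<lambda>w. \<Sum>x\<in>datasets n.
      uniform_prior n x * chan_mult n (chanN p) (chanS n) x y * gT w x) ` UNIV)
    = (real (max k (n - k)) * p + real (min k (n - k)) * (1 - p)) / real n / 2 ^ n"
proof -
  define a where "a w = real (if w then k else n - k)" for w
  have "k \<le> n"
    using assms(1,2) count_le_length[of y True] by (simp add: datasets_def)
  then have "real (n choose k) > 0"
    by simp
  have "(\<Sum>z\<in>datasets_count n k. krr_q p (z ! 0) w)
      = (p * a w + (1 - p) * a (\<not> w)) * real (n choose k) / real n" for w
    using sum_datasets_count_krr_q[OF assms(3), where k = k and p = p and w = w] assms(3)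
    by (simp add: a_def eq_divide_eq mult.commute)
  then have "(\<Sum>x\<in>datasets n. uniform_prior n x * chan_mult n (chanN p) (chanS n) x y * gT w x)
      = (p * a w + (1 - p) * a (\<not> w)) / real n / 2 ^ n" for w
    using sum_prior_chanNS_gT[OF assms(1,3), where p = p and w = w] assms(2)
      \<open>real (n choose k) > 0\<close>
    by simp
  then have "Max ((\<lambda>w. \<Sum>x\<in>datasets n.
        uniform_prior n x * chan_mult n (chanN p) (chanS n) x y * gT w x) ` UNIV)
      = max (p * a True + (1 - p) * a False) (p * a False + (1 - p) * a True) / real n / 2 ^ n"
    using assms(3) by (simp add: UNIV_bool max_divide_distrib_right)
  also have "\<dots> = (p * max (a True) (a False) + (1 - p) * min (a True) (a False)) / real n / 2 ^ n"
    by (simp only: max_convex_comb_swap[OF assms(4)])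
  also have "\<dots> = (real (max k (n - k)) * p + real (min k (n - k)) * (1 - p)) / real n / 2 ^ n"
    by (simp add: a_def of_nat_max of_nat_min mult.commute)
  finally show ?thesis .
qed

theorem mainTheorem11:
  fixes n :: nat and \<epsilon> p :: real
  assumes "n \<ge> 1" and "\<epsilon> \<ge> 0" and "p = exp \<epsilon> / (1 + exp \<epsilon>)"
  shows "post_vuln n gT (uniform_prior n) (chan_mult n (chanN p) (chanS n))
       = 1 / 2 ^ n * (\<Sum>i=0..n. real (n choose i) *
            ((real (max i (n - i)) * p + real (min i (n - i)) * (1 - p)) / real n))"
proof -
  define V where
    "V k = (real (max k (n - k)) * p + real (min k (n - k)) * (1 - p)) / real n / 2 ^ n" for k
  have "1 \<le> exp \<epsilon>"
    using assms(2) by simp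
  then have "1/2 \<le> p"
    using assms(3) by (simp add: le_divide_eq add_pos_pos)
  then have "post_vuln n gT (uniform_prior n) (chan_mult n (chanN p) (chanS n))
      = (\<Sum>y\<in>datasets n. V (count_list y True))"
    unfolding post_vuln_def V_def using assms(1)
    by (intro sum.cong refl Max_sum_prior_chanNS_gT) auto
  also have "\<dots> = (\<Sum>k=0..n. real (n choose k) * V k)"
    by (rule sum_datasets_by_count)
  also have "\<dots> = 1 / 2 ^ n * (\<Sum>i=0..n. real (n choose i) *
            ((real (max i (n - i)) * p + real (min i (n - i)) * (1 - p)) / real n))"
    unfolding V_def sum_distrib_left by (intro sum.cong refl) simp
  finally show ?thesis .
qed

end
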